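(* For any $(a,b,c,\lambda),(\bar a,\bar b,\bar c,\bar\lambda)\in(\mathbb F^\times)^4$ the following are equivalent: (i) $(a,b,c,\lambda)\approx(\bar a,\bar b,\bar c,\bar\lambda)$; (ii) there is a $\triangle_q$-module homomorphism $M_\lambda(a,b,c)\to M_{\bar\lambda}(\bar a,\bar b,\bar c)$ sending $m_0$ to $\bar m_0$; (iii) there is a $\triangle_q$-module homomorphism $M_{\bar\lambda}(\bar a,\bar b,\bar c)\to M_\lambda(a,b,c)$ sending $\bar m_0$ to $m_0$; (iv) there is a $\triangle_q$-module isomorphism $M_\lambda(a,b,c)\to M_{\bar\lambda}(\bar a,\bar b,\bar c)$ sending $m_0$ to $\bar m_0$; (v) there is a $\triangle_q$-module isomorphism $M_{\bar\lambda}(\bar a,\bar b,\bar c)\to M_\lambda(a,b,c)$ sending $\bar m_0$ to $m_0$.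
   Context: $\mathbb F$ is an algebraically closed field and $q\in\mathbb F^\times$ a root of unity of order $d\notin\{1,2,4\}$. $\sqrt{x}$ denotes a fixed square root. $\triangle_q$ is the unital associative $\mathbb F$-algebra with generators $A,B,C$ subject to: each of $A+\frac{qBC-q^{-1}CB}{q^2-q^{-2}}$, $B+\frac{qCA-q^{-1}AC}{q^2-q^{-2}}$, $C+\frac{qAB-q^{-1}BA}{q^2-q^{-2}}$ is central; $\alpha,\beta,\gamma$ are these times $q+q^{-1}$. For $(a,b,c,\lambda)\in(\mathbb F^\times)^4$, $i\in\mathbb N$: $\theta_i=a\lambda^{-1}q^{2i}+a^{-1}\lambda q^{-2i}$, $\theta_i^*=b\lambda^{-1}q^{2i}+b^{-1}\lambda q^{-2i}$, $\varphi_i=a^{-1}b^{-1}\lambda q(q^i-q^{-i})(\lambda^{-1}q^{i-1}-\lambda q^{1-i})(q^{-i}-abc\lambda^{-1}q^{i-1})(q^{-i}-abc^{-1}\lambda^{-1}q^{i-1})$. $M_\lambda(a,b,c)$ is the $\triangle_q$-module with basis $\{m_i\}_{i\in\mathbb N}$, $(A-\theta_i)m_i=m_{i+1}$, $(B-\theta_i^* )m_i=\varphi_im_{i-1}$, with $\alpha,\beta,\gamma$ acting as $(b+b^{-1})(c+c^{-1})+(a+a^{-1})(\lambda q+\lambda^{-1}q^{-1})$, $(c+c^{-1})(a+a^{-1})+(b+b^{-1})(\lambda q+\lambda^{-1}q^{-1})$, $(a+a^{-1})(b+b^{-1})+(c+c^{-1})(\lambda q+\lambda^{-1}q^{-1})$;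 $\{\bar m_i\}$ denotes the corresponding basis of $M_{\bar\lambda}(\bar a,\bar b,\bar c)$. $\{\pm1\}$ acts on $(\mathbb F^\times)^4$ by $(-1)\cdot(a,b,c,\lambda)=(-a,-b,-c,-\lambda)$; with $[\cdot]$ the $\{\pm1\}$-orbit, $\mathfrak S_4$ acts on the right by $[a,b,c,\lambda](1\,2)=[a,b,c^{-1},\lambda]$, $[a,b,c,\lambda](3\,4)=[a^{-1},b,c,\lambda]$, $[a,b,c,\lambda](2\,3)=[a/s,b/s,c/s,\lambda/s]$, $s=\sqrt{abc\lambda q}$; $\approx$ means the $\{\pm1\}$-orbits lie in the same $\mathfrak S_4$-orbit. *)

theory Defs
  imports "HOL-Computational_Algebra.Polynomial"
begin

definition alg_closed_field :: "'a::field itself \<Rightarrow> bool" where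
  "alg_closed_field _ \<longleftrightarrow> (\<forall>p :: 'a poly. degree p \<ge> 1 \<longrightarrow> (\<exists>x. poly p x = 0))"

type_synonym 'a quad = "'a \<times> 'a \<times> 'a \<times> 'a"

definition theta :: "'a::field \<Rightarrow> 'a quad \<Rightarrow> nat \<Rightarrow> 'a" where
  "theta q x i = (case x of (a,b,c,l) \<Rightarrow>
     a * inverse l * q powi (2 * int i) + inverse a * l * q powi (- 2 * int i))"

definition thetas :: "'a::field \<Rightarrow> 'a quad \<Rightarrow> nat \<Rightarrow> 'a" where
  "thetas q x i = (case x of (a,b,c,l) \<Rightarrow>
     b * inverse l * q powi (2 * int i) + inverse b * l * q powi (- 2 * int i))"

definition phi :: "'a::field \<Rightarrow> 'a quad \<Rightarrow> nat \<Rightarrow> 'a" where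
  "phi q x i = (case x of (a,b,c,l) \<Rightarrow>
     inverse a * inverse b * l * q
     * (q powi int i - q powi (- int i))
     * (inverse l * q powi (int i - 1) - l * q powi (1 - int i))
     * (q powi (- int i) - a * b * c * inverse l * q powi (int i - 1))
     * (q powi (- int i) - a * b * inverse c * inverse l * q powi (int i - 1)))"

definition gammaM :: "'a::field \<Rightarrow> 'a quad \<Rightarrow> 'a" where
  "gammaM q x = (case x of (a,b,c,l) \<Rightarrow>
     (a + inverse a) * (b + inverse b) + (c + inverse c) * (l * q + inverse l * inverse q))"

text \<open>The module M_lambda(a,b,c): elements are finitely supported coefficient
  sequences v (v = sum_i v i * m_i).\<close>
definition fin_vec :: "(nat \<Rightarrow> 'a::zero) set" where
  "fin_vec = {v. finite {i. v i \<noteq> 0}}"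

definition basis_vec :: "nat \<Rightarrow> nat \<Rightarrow> 'a::{zero,one}" where
  "basis_vec i = (\<lambda>j. if j = i then 1 else 0)"

definition actA :: "'a::field \<Rightarrow> 'a quad \<Rightarrow> (nat \<Rightarrow> 'a) \<Rightarrow> nat \<Rightarrow> 'a" where
  "actA q x v = (\<lambda>j. theta q x j * v j + (if j = 0 then 0 else v (j - 1)))"

definition actB :: "'a::field \<Rightarrow> 'a quad \<Rightarrow> (nat \<Rightarrow> 'a) \<Rightarrow> nat \<Rightarrow> 'a" where
  "actB q x v = (\<lambda>j. thetas q x j * v j + phi q x (Suc j) * v (Suc j))"

text \<open>C acts as forced by gamma = (q+q^-1)(C + (qAB - q^-1 BA)/(q^2-q^-2)) being the scalar gammaM.\<close>
definition actC :: "'a::field \<Rightarrow> 'a quad \<Rightarrow> (nat \<Rightarrow> 'a) \<Rightarrow> nat \<Rightarrow> 'a" where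
  "actC q x v = (\<lambda>j. gammaM q x / (q + inverse q) * v j
      - (q * actA q x (actB q x v) j - inverse q * actB q x (actA q x v) j)
        / (q ^ 2 - inverse q ^ 2))"

definition is_hom :: "'a::field \<Rightarrow> 'a quad \<Rightarrow> 'a quad \<Rightarrow> ((nat \<Rightarrow> 'a) \<Rightarrow> nat \<Rightarrow> 'a) \<Rightarrow> bool" where
  "is_hom q x y f \<longleftrightarrow>
     (\<forall>v\<in>fin_vec. f v \<in> fin_vec) \<and>
     (\<forall>u\<in>fin_vec. \<forall>v\<in>fin_vec. f (\<lambda>j. u j + v j) = (\<lambda>j. f u j + f v j)) \<and>
     (\<forall>k. \<forall>v\<in>fin_vec. f (\<lambda>j. k * v j) = (\<lambda>j. k * f v j)) \<and>
     (\<forall>v\<in>fin_vec. f (actA q x v) = actA q y (f v)) \<and>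
     (\<forall>v\<in>fin_vec. f (actB q x v) = actB q y (f v)) \<and>
     (\<forall>v\<in>fin_vec. f (actC q x v) = actC q y (f v))"

definition is_iso :: "'a::field \<Rightarrow> 'a quad \<Rightarrow> 'a quad \<Rightarrow> ((nat \<Rightarrow> 'a) \<Rightarrow> nat \<Rightarrow> 'a) \<Rightarrow> bool" where
  "is_iso q x y f \<longleftrightarrow> is_hom q x y f \<and> bij_betw f fin_vec fin_vec"

text \<open>Generator steps of the {+-1} and S_4 actions on representatives.\<close>
definition orbit_step :: "'a::field \<Rightarrow> 'a quad \<Rightarrow> 'a quad \<Rightarrow> bool" where
  "orbit_step q x y \<longleftrightarrow> (case x of (a,b,c,l) \<Rightarrow>
      y = (-a, -b, -c, -l)
    \<or> y = (a, b, inverse c, l)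
    \<or> y = (inverse a, b, c, l)
    \<or> (\<exists>s. s ^ 2 = a * b * c * l * q \<and> y = (a / s, b / s, c / s, l / s)))"

text \<open>x \<approx> y: the {+-1}-orbits of x and y lie in the same S_4-orbit.\<close>
definition approx :: "'a::field \<Rightarrow> 'a quad \<Rightarrow> 'a quad \<Rightarrow> bool" where
  "approx q x y \<longleftrightarrow> (\<lambda>u v. orbit_step q u v \<or> orbit_step q v u)\<^sup>*\<^sup>* x y"

end

(*
  M_lambda(a,b,c) is generated by m_0 under A, because m_(i+1) = (A - theta_i) m_i.  So a
  homomorphism sending m_0 to the generator of M_lambda'(a',b',c') is unique if it exists: it must
  send m_i to (A - theta_(i-1)) ... (A - theta_0) applied to that generator.  This map intertwines
  B and C as soon as it does so at m_0 and the central elements beta and gamma act by the same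
  scalars, since the Askey-Wilson relations express BA and CA through AB, AC, B, C, beta and gamma
  (the one for CA holds in M_lambda(a,b,c) because theta_i, theta*_i, phi_i satisfy four polynomial
  identities).  At m_0 the data are theta*_0 and the coefficients of C m_0 = kappa m_0 + mu A m_0.
  Homomorphisms fixing m_0 in opposite directions compose to the identity, hence are isomorphisms.

  The scalars (mu, kappa, gamma, beta) determine, and are determined by, b/lambda together with the
  monic polynomial whose roots are c/lambda, 1/(c lambda), abq, bq/a.  The generators (12), (23),
  (34) of S_4 permute these roots by adjacent transpositions and fix b/lambda, and -1 fixes both;
  conversely equal roots and equal b/lambda force equality up to sign.  So the invariants agree
  exactly when the two quadruples are related by the orbit relation.
*)

theory Submission
  imports Defs
begin

section \<open>The Askey-Wilson relations in $M_\lambda(a,b,c)$\<close>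

definition betaM :: "'a::field \<Rightarrow> 'a quad \<Rightarrow> 'a" where
  "betaM q x = (case x of (a,b,c,l) \<Rightarrow>
     (c + inverse c) * (a + inverse a) + (b + inverse b) * (l * q + inverse l * inverse q))"

definition nonzero_quad :: "'a::zero quad \<Rightarrow> bool" where
  "nonzero_quad x \<longleftrightarrow> (case x of (a,b,c,l) \<Rightarrow> a \<noteq> 0 \<and> b \<noteq> 0 \<and> c \<noteq> 0 \<and> l \<noteq> 0)"

lemma q2_minus_inverse_nonzeroD:
  fixes q :: "'a::field"
  assumes "q^2 - inverse q^2 \<noteq> 0"
  shows "q \<noteq> 0" and "q + inverse q \<noteq> 0"
proof -
  show "q \<noteq> 0" using assms by auto
  have "q^2 - inverse q^2 = (q - inverse q) * (q + inverse q)"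
    by (simp add: power2_eq_square algebra_simps)
  with assms show "q + inverse q \<noteq> 0" by auto
qed

lemma q2_minus_inverse_nonzero_if_q4:
  fixes q :: "'a::field"
  assumes "q \<noteq> 0" "q^4 \<noteq> 1"
  shows "q^2 - inverse q^2 \<noteq> 0"
proof
  assume "q^2 - inverse q^2 = 0"
  then have "q^2 * q^2 = q^2 * inverse q^2" by simp
  also have "\<dots> = 1" using assms(1) by (simp flip: power_mult_distrib)
  finally show False using assms(2) by (simp flip: power_add)
qed

lemma power_int_double: "(q::'a::field) powi (2 * int n) = (q ^ n)^2"
proof -
  have "q powi (2 * int n) = q powi (int n * 2)" by (simp add: mult.commute)
  also have "\<dots> = (q powi int n) powi 2" by (rule power_int_mult)
  finally show ?thesis by simp
qed

lemma power_int_minus_double: "(q::'a::field) powi (- (2 * int n)) = (inverse q ^ n)^2"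
proof -
  have "q powi (- (2 * int n)) = inverse ((q ^ n)^2)"
    by (simp only: power_int_minus power_int_double)
  then show ?thesis by (simp add: power_inverse)
qed

lemma theta_Laurent:
  "theta q (a,b,c,l) n = a * inverse l * (q ^ n)^2 + inverse a * l * (inverse q ^ n)^2"
  by (simp add: theta_def power_int_double power_int_minus_double)

lemma thetas_Laurent:
  "thetas q (a,b,c,l) n = b * inverse l * (q ^ n)^2 + inverse b * l * (inverse q ^ n)^2"
  by (simp add: thetas_def power_int_double power_int_minus_double)

lemma phi_Laurent:
  assumes "(q::'a::field) \<noteq> 0"
  shows "phi q (a,b,c,l) n = inverse a * inverse b * l * q * (q ^ n - inverse q ^ n)
    * (inverse l * q ^ n * inverse q - l * q * inverse q ^ n)
    * (inverse q ^ n - a * b * c * inverse l * q ^ n * inverse q)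
    * (inverse q ^ n - a * b * inverse c * inverse l * q ^ n * inverse q)"
  using assms
  by (simp add: phi_def power_int_diff power_int_minus power_inverse divide_inverse mult.assoc)

lemma phi_0: "phi q x 0 = 0"
  by (simp add: phi_def split: prod.splits)

text \<open>In the four identities below, $q^n$ and all inverses are replaced by fresh variables
  subject to $u \cdot u^{-1} = 1$, which turns each of them into an ideal membership problem.\<close>

lemma theta_quadratic:
  fixes q a b c l :: "'a::field"
  assumes "q \<noteq> 0" "a \<noteq> 0" "l \<noteq> 0"
  shows "theta q (a,b,c,l) n ^ 2
     - (q^2 + inverse q^2) * theta q (a,b,c,l) n * theta q (a,b,c,l) (Suc n)
     + theta q (a,b,c,l) (Suc n) ^ 2 + (q^2 - inverse q^2)^2 = 0"
proof -
  define P iP where "P = q ^ n" "iP = inverse q ^ n"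
  define iq ia il where "iq = inverse q" "ia = inverse a" "il = inverse l"
  have "P * iP = 1" "q * iq = 1" "a * ia = 1" "l * il = 1"
    using assms by (simp_all add: P_iP_def iq_ia_il_def flip: power_mult_distrib)
  then show ?thesis
    unfolding theta_Laurent power_Suc
    unfolding P_iP_def[symmetric] unfolding iq_ia_il_def[symmetric] by algebra
qed

lemma thetas_recurrence:
  fixes q a b c l :: "'a::field"
  assumes "q \<noteq> 0"
  shows "thetas q (a,b,c,l) n - (q^2 + inverse q^2) * thetas q (a,b,c,l) (Suc n)
     + thetas q (a,b,c,l) (Suc (Suc n)) = 0"
proof -
  define P iP where "P = q ^ n" "iP = inverse q ^ n"
  define iq where "iq = inverse q"
  have "q * iq = 1" using assms by (simp add: iq_def)
  then show ?thesis
    unfolding thetas_Laurent power_Suc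
    unfolding P_iP_def[symmetric] unfolding iq_def[symmetric] by algebra
qed

lemma gammaM_identity:
  fixes q a b c l :: "'a::field"
  assumes "q \<noteq> 0" "a \<noteq> 0" "b \<noteq> 0" "c \<noteq> 0" "l \<noteq> 0"
  shows "(theta q (a,b,c,l) (Suc n) + theta q (a,b,c,l) n)
       * (thetas q (a,b,c,l) n + thetas q (a,b,c,l) (Suc n))
     + phi q (a,b,c,l) n + phi q (a,b,c,l) (Suc (Suc n))
     - (q^2 + inverse q^2) * (theta q (a,b,c,l) (Suc n) * thetas q (a,b,c,l) (Suc n)
         + theta q (a,b,c,l) n * thetas q (a,b,c,l) n + phi q (a,b,c,l) (Suc n))
     + (q - inverse q)^2 * gammaM q (a,b,c,l) = 0"
proof -
  define P iP where "P = q ^ n" "iP = inverse q ^ n"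
  define iq ia ib ic il where
    "iq = inverse q" "ia = inverse a" "ib = inverse b" "ic = inverse c" "il = inverse l"
  have "P * iP = 1" "q * iq = 1" "a * ia = 1" "b * ib = 1" "c * ic = 1" "l * il = 1"
    using assms by (simp_all add: P_iP_def iq_ia_ib_ic_il_def flip: power_mult_distrib)
  then show ?thesis
    unfolding theta_Laurent thetas_Laurent phi_Laurent[OF \<open>q \<noteq> 0\<close>] gammaM_def prod.case power_Suc
    unfolding P_iP_def[symmetric] unfolding iq_ia_ib_ic_il_def[symmetric] by algebra
qed

lemma betaM_identity:
  fixes q a b c l :: "'a::field"
  assumes "q \<noteq> 0" "a \<noteq> 0" "b \<noteq> 0" "c \<noteq> 0" "l \<noteq> 0"
  shows "2 * thetas q (a,b,c,l) (Suc n) * theta q (a,b,c,l) (Suc n) ^ 2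
     + (theta q (a,b,c,l) (Suc n) + theta q (a,b,c,l) n) * phi q (a,b,c,l) (Suc n)
     + phi q (a,b,c,l) (Suc (Suc n)) * (theta q (a,b,c,l) (Suc (Suc n)) + theta q (a,b,c,l) (Suc n))
     - (q^2 + inverse q^2) * (theta q (a,b,c,l) (Suc n) ^ 2 * thetas q (a,b,c,l) (Suc n)
          + theta q (a,b,c,l) (Suc n) * phi q (a,b,c,l) (Suc (Suc n))
          + phi q (a,b,c,l) (Suc n) * theta q (a,b,c,l) (Suc n))
     + (q - inverse q)^2 * gammaM q (a,b,c,l) * theta q (a,b,c,l) (Suc n)
     - (q - inverse q) * (q^2 - inverse q^2) * betaM q (a,b,c,l)
     + (q^2 - inverse q^2)^2 * thetas q (a,b,c,l) (Suc n) = 0"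
proof -
  define P iP where "P = q ^ n" "iP = inverse q ^ n"
  define iq ia ib ic il where
    "iq = inverse q" "ia = inverse a" "ib = inverse b" "ic = inverse c" "il = inverse l"
  have "P * iP = 1" "q * iq = 1" "a * ia = 1" "b * ib = 1" "c * ic = 1" "l * il = 1"
    using assms by (simp_all add: P_iP_def iq_ia_ib_ic_il_def flip: power_mult_distrib)
  then show ?thesis
    unfolding theta_Laurent thetas_Laurent phi_Laurent[OF \<open>q \<noteq> 0\<close>] gammaM_def betaM_def
      prod.case power_Suc
    unfolding P_iP_def[symmetric] unfolding iq_ia_ib_ic_il_def[symmetric] by algebra
qed

lemma betaM_identity_0:
  fixes q a b c l :: "'a::field"
  assumes "q \<noteq> 0" "a \<noteq> 0" "b \<noteq> 0" "c \<noteq> 0" "l \<noteq> 0"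
  shows "2 * thetas q (a,b,c,l) 0 * theta q (a,b,c,l) 0 ^ 2
     + phi q (a,b,c,l) (Suc 0) * (theta q (a,b,c,l) (Suc 0) + theta q (a,b,c,l) 0)
     - (q^2 + inverse q^2) * (theta q (a,b,c,l) 0 ^ 2 * thetas q (a,b,c,l) 0
          + theta q (a,b,c,l) 0 * phi q (a,b,c,l) (Suc 0))
     + (q - inverse q)^2 * gammaM q (a,b,c,l) * theta q (a,b,c,l) 0
     - (q - inverse q) * (q^2 - inverse q^2) * betaM q (a,b,c,l)
     + (q^2 - inverse q^2)^2 * thetas q (a,b,c,l) 0 = 0"
proof -
  define P iP where "P = q ^ 0" "iP = inverse q ^ 0"
  define iq ia ib ic il where
    "iq = inverse q" "ia = inverse a" "ib = inverse b" "ic = inverse c" "il = inverse l"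
  have "P = 1" "iP = 1" "q * iq = 1" "a * ia = 1" "b * ib = 1" "c * ic = 1" "l * il = 1"
    using assms by (simp_all add: P_iP_def iq_ia_ib_ic_il_def)
  then show ?thesis
    unfolding theta_Laurent thetas_Laurent phi_Laurent[OF \<open>q \<noteq> 0\<close>] gammaM_def betaM_def
      prod.case power_Suc
    unfolding P_iP_def[symmetric] unfolding iq_ia_ib_ic_il_def[symmetric] by algebra
qed

text \<open>For $A$ lower and $B$ upper bidiagonal, the four identities are the four nonzero diagonals
  of the cubic relation; \<open>h_identity_0\<close> is \<open>h_identity\<close> at $n = -1$, where \<open>ph 0 = 0\<close>.\<close>

lemma bidiagonal_cubic_relation:
  fixes th ths ph :: "nat \<Rightarrow> 'a::field"
  assumes th_quadratic: "\<And>n. th n ^ 2 - t * th n * th (Suc n) + th (Suc n) ^ 2 + k = 0"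
    and ths_recurrence: "\<And>n. ths n - t * ths (Suc n) + ths (Suc (Suc n)) = 0"
    and g_identity: "\<And>n. (th (Suc n) + th n) * (ths n + ths (Suc n)) + ph n + ph (Suc (Suc n))
       - t * (th (Suc n) * ths (Suc n) + th n * ths n + ph (Suc n)) + g = 0"
    and h_identity: "\<And>n. 2 * ths (Suc n) * th (Suc n) ^ 2 + (th (Suc n) + th n) * ph (Suc n)
       + ph (Suc (Suc n)) * (th (Suc (Suc n)) + th (Suc n))
       - t * (th (Suc n) ^ 2 * ths (Suc n) + th (Suc n) * ph (Suc (Suc n))
         + ph (Suc n) * th (Suc n))
       + g * th (Suc n) - h + k * ths (Suc n) = 0"
    and h_identity_0: "2 * ths 0 * th 0 ^ 2 + ph (Suc 0) * (th (Suc 0) + th 0)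
       - t * (th 0 ^ 2 * ths 0 + th 0 * ph (Suc 0)) + g * th 0 - h + k * ths 0 = 0"
    and ph_0: "ph 0 = 0"
  defines "A \<equiv> \<lambda>v j. th j * v j + (if j = 0 then 0 else v (j - 1))"
    and "B \<equiv> \<lambda>v j. ths j * v j + ph (Suc j) * v (Suc j)"
  shows "A (A (B w)) j - t * A (B (A w)) j + B (A (A w)) j + g * A w j - h * w j + k * B w j = 0"
proof (cases j)
  case 0
  show ?thesis using th_quadratic[of 0] h_identity_0 unfolding 0 A_def B_def by simp algebra
next
  case (Suc m)
  show ?thesis
  proof (cases m)
    case 0
    show ?thesis using th_quadratic[of 1] h_identity[of 0] g_identity[of 0] ph_0
      unfolding \<open>j = Suc m\<close> 0 A_def B_def by simp algebra
  next
    case (Suc i)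
    show ?thesis
      using th_quadratic[of "Suc (Suc i)"] h_identity[of "Suc i"] g_identity[of "Suc i"]
        ths_recurrence[of i]
      unfolding \<open>j = Suc m\<close> Suc A_def B_def by simp algebra
  qed
qed

lemma actA_actB_cubic_relation:
  fixes q :: "'a::field"
  assumes "q \<noteq> 0" "nonzero_quad x"
  shows "actA q x (actA q x (actB q x w)) j
     - (q^2 + inverse q^2) * actA q x (actB q x (actA q x w)) j
     + actB q x (actA q x (actA q x w)) j
     + (q - inverse q)^2 * gammaM q x * actA q x w j
     - (q - inverse q) * (q^2 - inverse q^2) * betaM q x * w j
     + (q^2 - inverse q^2)^2 * actB q x w j = 0"
proof -
  obtain a b c l where x: "x = (a,b,c,l)" by (cases x)
  have nz: "a \<noteq> 0" "b \<noteq> 0" "c \<noteq> 0" "l \<noteq> 0" using assms(2) by (simp_all add: x nonzero_quad_def)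
  show ?thesis
    unfolding x actA_def actB_def
    by (rule bidiagonal_cubic_relation[unfolded mult.assoc[symmetric]])
      (use theta_quadratic thetas_recurrence gammaM_identity betaM_identity betaM_identity_0 phi_0
        assms(1) nz in \<open>simp_all add: mult.assoc\<close>)
qed

lemma actB_actA:
  fixes q :: "'a::field"
  assumes "q^2 - inverse q^2 \<noteq> 0"
  shows "actB q x (actA q x w) = (\<lambda>j. q^2 * actA q x (actB q x w) j
      + (- q * (q^2 - inverse q^2) * (gammaM q x / (q + inverse q))) * w j
      + (q * (q^2 - inverse q^2)) * actC q x w j)"
proof
  fix j
  have "actB q x (actA q x w) j = q^2 * actA q x (actB q x w) j
      - q * (q^2 - inverse q^2) * (gammaM q x / (q + inverse q) * w j - actC q x w j)"
    using assms q2_minus_inverse_nonzeroD(1)[OF assms]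
    by (simp add: actC_def field_simps power2_eq_square)
  then show "actB q x (actA q x w) j = q^2 * actA q x (actB q x w) j
      + (- q * (q^2 - inverse q^2) * (gammaM q x / (q + inverse q))) * w j
      + (q * (q^2 - inverse q^2)) * actC q x w j"
    by (simp add: algebra_simps)
qed

lemma actC_actA:
  fixes q :: "'a::field"
  assumes qK: "q^2 - inverse q^2 \<noteq> 0" and x: "nonzero_quad x"
  shows "actC q x (actA q x w) = (\<lambda>j. inverse q^2 * actA q x (actC q x w) j
      + ((q^2 - inverse q^2) * inverse q * (betaM q x / (q + inverse q))) * w j
      + (- (q^2 - inverse q^2) * inverse q) * actB q x w j)"
proof
  fix j
  have q: "q \<noteq> 0" "q + inverse q \<noteq> 0"
    using q2_minus_inverse_nonzeroD[OF qK] by blast+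
  let ?A = "actA q x" and ?B = "actB q x"
  have A_C: "?A (actC q x w) j = gammaM q x / (q + inverse q) * ?A w j
     - (q * ?A (?A (?B w)) j - inverse q * ?A (?B (?A w)) j) / (q^2 - inverse q^2)"
    by (simp add: actC_def actA_def divide_inverse algebra_simps)
  define iq where "iq = inverse q"
  define s k where "s = inverse (q + iq)" "k = inverse (q^2 - iq^2)"
  have "q * iq = 1" "(q + iq) * s = 1" "(q^2 - iq^2) * k = 1"
    using q qK by (simp_all add: iq_def s_k_def)
  with actA_actB_cubic_relation[OF q(1) x, of w j]
  show "actC q x (?A w) j = inverse q^2 * ?A (actC q x w) j
      + ((q^2 - inverse q^2) * inverse q * (betaM q x / (q + inverse q))) * w j
      + (- (q^2 - inverse q^2) * inverse q) * ?B w j"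
    unfolding A_C unfolding actC_def divide_inverse
    unfolding iq_def[symmetric] unfolding s_k_def[symmetric] by algebra
qed

section \<open>Finitely supported vectors and linear maps\<close>

lemma fin_vec_iff: "v \<in> fin_vec \<longleftrightarrow> (\<exists>N. \<forall>j\<ge>N. v j = 0)"
proof
  assume "v \<in> fin_vec"
  then obtain N where "\<forall>n\<in>{i. v i \<noteq> 0}. n < N"
    unfolding fin_vec_def using finite_nat_set_iff_bounded by blast
  then show "\<exists>N. \<forall>j\<ge>N. v j = 0" by (auto dest: leD)
next
  assume "\<exists>N. \<forall>j\<ge>N. v j = 0"
  then obtain N where "{i. v i \<noteq> 0} \<subseteq> {..<N}" by (auto simp: not_less[symmetric])
  then show "v \<in> fin_vec" unfolding fin_vec_def by (auto intro: finite_subset)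
qed

lemma fin_vecI: "(\<And>j. j \<ge> N \<Longrightarrow> v j = 0) \<Longrightarrow> v \<in> fin_vec"
  using fin_vec_iff by blast

lemma fin_vecE: assumes "v \<in> fin_vec" obtains N where "\<And>j. j \<ge> N \<Longrightarrow> v j = 0"
  using assms fin_vec_iff by blast

lemma fin_vec_lincomb:
  fixes u v :: "nat \<Rightarrow> 'a::field"
  assumes "u \<in> fin_vec" "v \<in> fin_vec"
  shows "(\<lambda>j. s * u j + t * v j) \<in> fin_vec"
proof -
  obtain N M where "\<And>j. j \<ge> N \<Longrightarrow> u j = 0" "\<And>j. j \<ge> M \<Longrightarrow> v j = 0"
    using assms by (metis fin_vecE)
  then show ?thesis by (intro fin_vecI[of "max N M"]) auto
qed

lemma fin_vec_basis: "basis_vec i \<in> fin_vec"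
  by (rule fin_vecI[of "Suc i"]) (simp add: basis_vec_def)

lemma fin_vec_actA:
  assumes "v \<in> fin_vec"
  shows "actA q x v \<in> fin_vec"
proof -
  obtain N where "\<And>j. j \<ge> N \<Longrightarrow> v j = 0" using assms fin_vecE by blast
  then show ?thesis by (intro fin_vecI[of "Suc N"]) (simp add: actA_def)
qed

lemma fin_vec_actB:
  assumes "v \<in> fin_vec"
  shows "actB q x v \<in> fin_vec"
proof -
  obtain N where "\<And>j. j \<ge> N \<Longrightarrow> v j = 0" using assms fin_vecE by blast
  then show ?thesis by (intro fin_vecI[of N]) (simp add: actB_def)
qed

lemma fin_vec_actC:
  assumes "v \<in> fin_vec"
  shows "actC q x v \<in> fin_vec"
proof -
  obtain N1 where "\<And>j. j \<ge> N1 \<Longrightarrow> v j = 0" using assms fin_vecE by blast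
  moreover obtain N2 where "\<And>j. j \<ge> N2 \<Longrightarrow> actA q x (actB q x v) j = 0"
    using fin_vec_actA[OF fin_vec_actB[OF assms]] fin_vecE by blast
  moreover obtain N3 where "\<And>j. j \<ge> N3 \<Longrightarrow> actB q x (actA q x v) j = 0"
    using fin_vec_actB[OF fin_vec_actA[OF assms]] fin_vecE by blast
  ultimately show ?thesis by (intro fin_vecI[of "max N1 (max N2 N3)"]) (simp add: actC_def)
qed

lemma actA_lincomb: "actA q x (\<lambda>j. s * u j + t * v j) = (\<lambda>j. s * actA q x u j + t * actA q x v j)"
  by (simp add: actA_def fun_eq_iff algebra_simps)

lemma actB_lincomb: "actB q x (\<lambda>j. s * u j + t * v j) = (\<lambda>j. s * actB q x u j + t * actB q x v j)"
  by (simp add: actB_def fun_eq_iff algebra_simps)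

lemma actC_lincomb: "actC q x (\<lambda>j. s * u j + t * v j) = (\<lambda>j. s * actC q x u j + t * actC q x v j)"
  by (simp add: actC_def actA_lincomb actB_lincomb fun_eq_iff diff_divide_distrib add_divide_distrib
      algebra_simps)

definition fin_linear :: "((nat \<Rightarrow> 'a::field) \<Rightarrow> nat \<Rightarrow> 'a) \<Rightarrow> bool" where
  "fin_linear f \<longleftrightarrow> (\<forall>v\<in>fin_vec. f v \<in> fin_vec) \<and>
     (\<forall>u\<in>fin_vec. \<forall>v\<in>fin_vec. f (\<lambda>j. u j + v j) = (\<lambda>j. f u j + f v j)) \<and>
     (\<forall>k. \<forall>v\<in>fin_vec. f (\<lambda>j. k * v j) = (\<lambda>j. k * f v j))"

lemma is_hom_iff:
  "is_hom q x y f \<longleftrightarrow> fin_linear f \<and>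
     (\<forall>v\<in>fin_vec. f (actA q x v) = actA q y (f v)) \<and>
     (\<forall>v\<in>fin_vec. f (actB q x v) = actB q y (f v)) \<and>
     (\<forall>v\<in>fin_vec. f (actC q x v) = actC q y (f v))"
  unfolding is_hom_def fin_linear_def by blast

lemma fin_linearI:
  fixes f :: "(nat \<Rightarrow> 'a::field) \<Rightarrow> nat \<Rightarrow> 'a"
  assumes "\<And>v. v \<in> fin_vec \<Longrightarrow> f v \<in> fin_vec"
    and "\<And>u v s t. u \<in> fin_vec \<Longrightarrow> v \<in> fin_vec \<Longrightarrow>
      f (\<lambda>j. s * u j + t * v j) = (\<lambda>j. s * f u j + t * f v j)"
  shows "fin_linear f"
  unfolding fin_linear_def
proof (intro conjI ballI allI)
  fix u v :: "nat \<Rightarrow> 'a"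
  assume "u \<in> fin_vec" "v \<in> fin_vec"
  then show "f (\<lambda>j. u j + v j) = (\<lambda>j. f u j + f v j)"
    using assms(2)[of u v 1 1] by simp
next
  fix v :: "nat \<Rightarrow> 'a" and k
  assume "v \<in> fin_vec"
  then show "f (\<lambda>j. k * v j) = (\<lambda>j. k * f v j)"
    using assms(2)[of v v k 0] by simp
qed (rule assms(1))

lemma fin_linear_lincomb:
  assumes f: "fin_linear f" and "u \<in> fin_vec" "v \<in> fin_vec"
  shows "f (\<lambda>j. s * u j + t * v j) = (\<lambda>j. s * f u j + t * f v j)"
proof -
  have "(\<lambda>j. s * u j) \<in> fin_vec" "(\<lambda>j. t * v j) \<in> fin_vec"
    using fin_vec_lincomb[OF \<open>u \<in> fin_vec\<close> \<open>u \<in> fin_vec\<close>, of _ 0]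
      fin_vec_lincomb[OF \<open>v \<in> fin_vec\<close> \<open>v \<in> fin_vec\<close>, of _ 0] by simp_all
  with f assms(2,3) show ?thesis unfolding fin_linear_def by simp
qed

lemma fin_linear_lincomb3:
  assumes f: "fin_linear f" and u: "u1 \<in> fin_vec" "u2 \<in> fin_vec" "u3 \<in> fin_vec"
  shows "f (\<lambda>j. s1 * u1 j + s2 * u2 j + s3 * u3 j) = (\<lambda>j. s1 * f u1 j + s2 * f u2 j + s3 * f u3 j)"
proof -
  let ?u12 = "\<lambda>j. s1 * u1 j + s2 * u2 j"
  have "f (\<lambda>j. 1 * ?u12 j + s3 * u3 j) = (\<lambda>j. 1 * f ?u12 j + s3 * f u3 j)"
    by (rule fin_linear_lincomb[OF f fin_vec_lincomb[OF u(1,2)] u(3)])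
  then show ?thesis by (simp add: fin_linear_lincomb[OF f u(1,2)])
qed

lemma fin_linear_fin_vec: "fin_linear f \<Longrightarrow> v \<in> fin_vec \<Longrightarrow> f v \<in> fin_vec"
  unfolding fin_linear_def by blast

lemma fin_linear_scale: "fin_linear f \<Longrightarrow> v \<in> fin_vec \<Longrightarrow> f (\<lambda>j. k * v j) = (\<lambda>j. k * f v j)"
  unfolding fin_linear_def by blast

lemma is_homD:
  assumes "is_hom q x y f"
  shows "fin_linear f"
    and "v \<in> fin_vec \<Longrightarrow> f (actA q x v) = actA q y (f v)"
    and "v \<in> fin_vec \<Longrightarrow> f (actB q x v) = actB q y (f v)"
    and "v \<in> fin_vec \<Longrightarrow> f (actC q x v) = actC q y (f v)"
  using assms unfolding is_hom_iff by blast+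

lemma fin_vec_induct:
  fixes v :: "nat \<Rightarrow> 'a::field"
  assumes lincomb: "\<And>u v s t. u \<in> fin_vec \<Longrightarrow> v \<in> fin_vec \<Longrightarrow> P u \<Longrightarrow> P v \<Longrightarrow>
      P (\<lambda>j. s * u j + t * v j)"
    and basis: "\<And>i. P (basis_vec i)"
    and v: "v \<in> fin_vec"
  shows "P v"
proof -
  define trunc where "trunc n = (\<lambda>j. if j < n then v j else 0)" for n
  have trunc_fin: "trunc n \<in> fin_vec" for n
    by (rule fin_vecI[of n]) (simp add: trunc_def)
  have P_trunc: "P (trunc n)" for n
  proof (induction n)
    case 0
    have "trunc 0 = (\<lambda>j. 0 * basis_vec 0 j + 0 * basis_vec 0 j)" by (simp add: trunc_def)
    then show ?case by (simp only: lincomb[OF fin_vec_basis fin_vec_basis basis basis])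
  next
    case (Suc n)
    have "trunc (Suc n) = (\<lambda>j. 1 * trunc n j + v n * basis_vec n j)"
      by (auto simp: trunc_def basis_vec_def fun_eq_iff less_Suc_eq)
    then show ?case by (simp only: lincomb[OF trunc_fin fin_vec_basis Suc basis])
  qed
  obtain N where "\<And>j. j \<ge> N \<Longrightarrow> v j = 0" using v fin_vecE by blast
  then have "trunc N = v" by (auto simp: trunc_def fun_eq_iff not_less)
  with P_trunc[of N] show ?thesis by simp
qed

lemma actA_cyclic_induct:
  fixes v :: "nat \<Rightarrow> 'a::field"
  assumes lincomb: "\<And>u v s t. u \<in> fin_vec \<Longrightarrow> v \<in> fin_vec \<Longrightarrow> P u \<Longrightarrow> P v \<Longrightarrow>
      P (\<lambda>j. s * u j + t * v j)"
    and base: "P (basis_vec 0)"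
    and step: "\<And>v. v \<in> fin_vec \<Longrightarrow> P v \<Longrightarrow> P (actA q x v)"
    and v: "v \<in> fin_vec"
  shows "P v"
  using lincomb _ v
proof (rule fin_vec_induct)
  fix i
  show "P (basis_vec i)"
  proof (induction i)
    case (Suc i)
    have "basis_vec (Suc i) = (\<lambda>j. 1 * actA q x (basis_vec i) j + (- theta q x i) * basis_vec i j)"
      by (auto simp: actA_def basis_vec_def fun_eq_iff)
    then show ?case
      by (simp only: lincomb[OF fin_vec_actA[OF fin_vec_basis] fin_vec_basis
          step[OF fin_vec_basis Suc] Suc])
  qed (rule base)
qed

lemma actA_basis:
  "actA q x (basis_vec i) = (\<lambda>k. theta q x i * basis_vec i k + 1 * basis_vec (Suc i) k)"
  by (auto simp: actA_def basis_vec_def fun_eq_iff)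

lemma actB_basis_0: "actB q x (basis_vec 0) = (\<lambda>k. thetas q x 0 * basis_vec 0 k)"
  by (auto simp: actB_def basis_vec_def fun_eq_iff)

section \<open>The canonical map\<close>

text \<open>In $M(x)$ we have $m_{i+1} = (A - \theta_i(x)) \cdots (A - \theta_0(x))\, m_0$; the canonical
  map sends $m_i$ to the same polynomial in $A$ applied to $\bar m_0 \in M(y)$.\<close>

primrec canon_vec :: "'a::field \<Rightarrow> 'a quad \<Rightarrow> 'a quad \<Rightarrow> nat \<Rightarrow> nat \<Rightarrow> 'a" where
  "canon_vec q x y 0 = basis_vec 0"
| "canon_vec q x y (Suc i) =
    (\<lambda>k. actA q y (canon_vec q x y i) k - theta q x i * canon_vec q x y i k)"

definition canon_map :: "'a::field \<Rightarrow> 'a quad \<Rightarrow> 'a quad \<Rightarrow> (nat \<Rightarrow> 'a) \<Rightarrow> nat \<Rightarrow> 'a" where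
  "canon_map q x y v = (\<lambda>k. \<Sum>i\<in>{i. v i \<noteq> 0}. v i * canon_vec q x y i k)"

lemma canon_vec_eq_0: "i < k \<Longrightarrow> canon_vec q x y i k = 0"
proof (induction i arbitrary: k)
  case 0
  then show ?case by (simp add: basis_vec_def)
next
  case (Suc i)
  then have "canon_vec q x y i k = 0" "canon_vec q x y i (k - 1) = 0" by auto
  then show ?case using Suc.prems by (simp add: actA_def)
qed

lemma canon_map_eq_sum:
  assumes "\<And>j. j \<ge> N \<Longrightarrow> v j = 0"
  shows "canon_map q x y v = (\<lambda>k. \<Sum>i<N. v i * canon_vec q x y i k)"
proof
  fix k
  have "{i. v i \<noteq> 0} \<subseteq> {..<N}" using assms by (auto simp: not_less[symmetric])
  then show "canon_map q x y v k = (\<Sum>i<N. v i * canon_vec q x y i k)"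
    unfolding canon_map_def by (intro sum.mono_neutral_left) auto
qed

lemma canon_map_basis: "canon_map q x y (basis_vec i) = canon_vec q x y i"
proof -
  have "canon_map q x y (basis_vec i) = (\<lambda>k. \<Sum>j<Suc i. basis_vec i j * canon_vec q x y j k)"
    by (rule canon_map_eq_sum) (simp add: basis_vec_def)
  also have "\<dots> = canon_vec q x y i"
    by (simp add: basis_vec_def fun_eq_iff if_distrib[of "\<lambda>z. z * _"])
  finally show ?thesis .
qed

lemma fin_linear_canon_map: "fin_linear (canon_map q x y)"
proof (rule fin_linearI)
  fix v :: "nat \<Rightarrow> 'a" assume "v \<in> fin_vec"
  then obtain N where N: "\<And>j. j \<ge> N \<Longrightarrow> v j = 0" using fin_vecE by blast
  show "canon_map q x y v \<in> fin_vec"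
    by (rule fin_vecI[of N]) (simp add: canon_map_eq_sum[OF N] canon_vec_eq_0)
next
  fix u v :: "nat \<Rightarrow> 'a" and s t assume "u \<in> fin_vec" "v \<in> fin_vec"
  then obtain N1 N2 where "\<And>j. j \<ge> N1 \<Longrightarrow> u j = 0" "\<And>j. j \<ge> N2 \<Longrightarrow> v j = 0"
    by (metis fin_vecE)
  then have u: "\<And>j. j \<ge> max N1 N2 \<Longrightarrow> u j = 0" and v: "\<And>j. j \<ge> max N1 N2 \<Longrightarrow> v j = 0"
    by auto
  let ?sum = "\<lambda>w k. \<Sum>i<max N1 N2. w i * canon_vec q x y i k"
  have "canon_map q x y u = ?sum u" "canon_map q x y v = ?sum v"
    "canon_map q x y (\<lambda>j. s * u j + t * v j) = ?sum (\<lambda>j. s * u j + t * v j)"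
    by (rule canon_map_eq_sum; simp add: u v)+
  then show "canon_map q x y (\<lambda>j. s * u j + t * v j)
      = (\<lambda>j. s * canon_map q x y u j + t * canon_map q x y v j)"
    by (simp add: sum_distrib_left sum.distrib algebra_simps)
qed

lemma canon_map_actA:
  assumes "v \<in> fin_vec"
  shows "canon_map q x y (actA q x v) = actA q y (canon_map q x y v)"
proof (rule fin_vec_induct[OF _ _ assms,
      where P = "\<lambda>v. canon_map q x y (actA q x v) = actA q y (canon_map q x y v)"])
  fix i
  show "canon_map q x y (actA q x (basis_vec i)) = actA q y (canon_map q x y (basis_vec i))"
    unfolding actA_basis fin_linear_lincomb[OF fin_linear_canon_map fin_vec_basis fin_vec_basis]
    by (simp add: canon_map_basis)
qed (simp add: fin_linear_lincomb[OF fin_linear_canon_map] fin_vec_actA actA_lincomb)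

section \<open>Invariants\<close>

definition muC :: "'a::field \<Rightarrow> 'a quad \<Rightarrow> 'a" where
  "muC q x = actC q x (basis_vec 0) 1"

definition kappaC :: "'a::field \<Rightarrow> 'a quad \<Rightarrow> 'a" where
  "kappaC q x = actC q x (basis_vec 0) 0 - muC q x * theta q x 0"

lemma actC_basis_0:
  "actC q x (basis_vec 0) = (\<lambda>j. kappaC q x * basis_vec 0 j + muC q x * actA q x (basis_vec 0) j)"
proof
  fix j
  show "actC q x (basis_vec 0) j = kappaC q x * basis_vec 0 j + muC q x * actA q x (basis_vec 0) j"
  proof (cases "j \<le> 1")
    case True
    then consider "j = 0" | "j = 1" by linarith
    then show ?thesis by cases (simp_all add: kappaC_def muC_def actA_def basis_vec_def)
  next
    case False
    then show ?thesis by (simp add: actC_def actA_def actB_def basis_vec_def)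
  qed
qed

lemma actC_basis_0_at_0:
  "actC q x (basis_vec 0) 0 = gammaM q x / (q + inverse q)
      - (q * (theta q x 0 * thetas q x 0) - inverse q * (thetas q x 0 * theta q x 0 + phi q x 1))
        / (q^2 - inverse q^2)"
  by (simp add: actC_def actA_def actB_def basis_vec_def)

lemma actC_basis_0_at_1:
  "actC q x (basis_vec 0) 1 = (inverse q * thetas q x 1 - q * thetas q x 0) / (q^2 - inverse q^2)"
  by (simp add: actC_def actA_def actB_def basis_vec_def diff_divide_distrib)

definition module_invariants :: "'a::field \<Rightarrow> 'a quad \<Rightarrow> 'a quad" where
  "module_invariants q x = (muC q x, kappaC q x, gammaM q x, betaM q x)"

definition bl_ratio :: "'a::field quad \<Rightarrow> 'a" where
  "bl_ratio x = (case x of (a,b,c,l) \<Rightarrow> b / l)"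

text \<open>The generators $(1\,2)$, $(2\,3)$, $(3\,4)$ of $\mathfrak S_4$ act on these four quantities
  as the adjacent transpositions, and $-1$ fixes them.\<close>

definition orbit_coords :: "'a::field \<Rightarrow> 'a quad \<Rightarrow> 'a list" where
  "orbit_coords q x = (case x of (a,b,c,l) \<Rightarrow> [c / l, inverse (c * l), a * b * q, b * q / a])"

definition orbit_poly :: "'a::field \<Rightarrow> 'a quad \<Rightarrow> 'a poly" where
  "orbit_poly q x = (\<Prod>u\<leftarrow>orbit_coords q x. [:-u, 1:])"

definition orbit_invariant :: "'a::field \<Rightarrow> 'a quad \<Rightarrow> 'a \<times> 'a poly" where
  "orbit_invariant q x = (bl_ratio x, orbit_poly q x)"

lemma prod_linear_factors_4:
  "(\<Prod>u\<leftarrow>[u1,u2,u3,u4]. [:-u, 1:]) = [:u1 * u2 * u3 * u4,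
     - (u1 * u2 * u3 + u1 * u2 * u4 + u1 * u3 * u4 + u2 * u3 * u4),
     u1 * u2 + u1 * u3 + u1 * u4 + u2 * u3 + u2 * u4 + u3 * u4,
     - (u1 + u2 + u3 + u4), 1::'a::comm_ring_1:]"
  by (simp add: algebra_simps)

lemma orbit_poly_eq_pCons:
  "orbit_poly q x = [:coeff (orbit_poly q x) 0, coeff (orbit_poly q x) 1,
     coeff (orbit_poly q x) 2, coeff (orbit_poly q x) 3, 1:]"
  by (cases x) (simp add: orbit_poly_def orbit_coords_def prod_linear_factors_4 numeral_2_eq_2
      numeral_3_eq_3)

lemma coeff_prod_linear_factors_4:
  fixes u1 u2 u3 u4 :: "'a::comm_ring_1"
  defines "p \<equiv> \<Prod>u\<leftarrow>[u1,u2,u3,u4]. [:-u, 1:]"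
  shows "coeff p 0 = u1 * u2 * u3 * u4"
    and "coeff p 1 = - (u1 * u2 * u3 + u1 * u2 * u4 + u1 * u3 * u4 + u2 * u3 * u4)"
    and "coeff p 2 = u1 * u2 + u1 * u3 + u1 * u4 + u2 * u3 + u2 * u4 + u3 * u4"
    and "coeff p 3 = - (u1 + u2 + u3 + u4)"
  unfolding p_def prod_linear_factors_4 by (simp_all add: numeral_2_eq_2 numeral_3_eq_3)

lemma thetas_0_eq: "thetas q x 0 = bl_ratio x + inverse (bl_ratio x)"
  by (cases x) (simp add: thetas_Laurent bl_ratio_def divide_inverse mult.commute)

lemma module_invariants_closed_forms:
  fixes q :: "'a::field"
  assumes qK: "q^2 - inverse q^2 \<noteq> 0" and x: "nonzero_quad x"
  defines "r \<equiv> bl_ratio x * q" and "p \<equiv> orbit_poly q x"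
  shows muC_eq: "muC q x = - inverse r"
    and kappaC_eq: "kappaC q x * r^2 = - coeff p 1"
    and gammaM_eq: "gammaM q x * q * r^2 = - coeff p 3 * r^2 - q^2 * coeff p 1"
    and betaM_eq: "betaM q x * r = coeff p 2 + bl_ratio x ^ 2 + q^2"
    and orbit_poly_coeff_0: "coeff p 0 = r^2"
proof -
  obtain a b c l where xq: "x = (a,b,c,l)" by (cases x)
  have nz: "a \<noteq> 0" "b \<noteq> 0" "c \<noteq> 0" "l \<noteq> 0" using x by (auto simp: xq nonzero_quad_def)
  have q: "q \<noteq> 0" "q + inverse q \<noteq> 0"
    using q2_minus_inverse_nonzeroD[OF qK] by blast+
  note mu = muC_def actC_basis_0_at_1
  note kappa = kappaC_def muC_def actC_basis_0_at_0 actC_basis_0_at_1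
  define iq where "iq = inverse q"
  define s k where "s = inverse (q + iq)" "k = inverse (q^2 - iq^2)"
  define ia ib ic il where "ia = inverse a" "ib = inverse b" "ic = inverse c" "il = inverse l"
  have inverses: "q * iq = 1" "(q + iq) * s = 1" "(q^2 - iq^2) * k = 1"
    "a * ia = 1" "b * ib = 1" "c * ic = 1" "l * il = 1"
    using q qK nz by (simp_all add: iq_def s_k_def ia_ib_ic_il_def)
  note orbit = xq r_def p_def orbit_poly_def orbit_coords_def bl_ratio_def prod.case
    coeff_prod_linear_factors_4
  note Laurent = prod.case theta_Laurent thetas_Laurent phi_Laurent[OF q(1)] gammaM_def betaM_def
    bl_ratio_def divide_inverse inverse_mult_distrib inverse_inverse_eq One_nat_def power_Suc
  show "muC q x = - inverse r"
    unfolding mu orbit unfolding Laurent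
    unfolding power_0 power_one mult_1_right unfolding iq_def[symmetric]
    unfolding s_k_def[symmetric] unfolding ia_ib_ic_il_def[symmetric] using inverses by algebra
  show "kappaC q x * r^2 = - coeff p 1"
    unfolding kappa orbit unfolding Laurent
    unfolding power_0 power_one mult_1_right unfolding iq_def[symmetric]
    unfolding s_k_def[symmetric] unfolding ia_ib_ic_il_def[symmetric] using inverses by algebra
  show "gammaM q x * q * r^2 = - coeff p 3 * r^2 - q^2 * coeff p 1"
    unfolding orbit unfolding Laurent
    unfolding iq_def[symmetric] unfolding ia_ib_ic_il_def[symmetric] using inverses by algebra
  show "betaM q x * r = coeff p 2 + bl_ratio x ^ 2 + q^2"
    unfolding orbit unfolding Laurent
    unfolding iq_def[symmetric] unfolding ia_ib_ic_il_def[symmetric] using inverses by algebra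
  show "coeff p 0 = r^2"
    unfolding orbit unfolding Laurent
    unfolding iq_def[symmetric] unfolding ia_ib_ic_il_def[symmetric] using inverses by algebra
qed

lemma module_invariants_eq_iff:
  fixes q :: "'a::field"
  assumes qK: "q^2 - inverse q^2 \<noteq> 0" and x: "nonzero_quad x" and y: "nonzero_quad y"
  shows "module_invariants q x = module_invariants q y \<longleftrightarrow> orbit_invariant q x = orbit_invariant q y"
proof -
  have q: "q \<noteq> 0" using q2_minus_inverse_nonzeroD(1)[OF qK] by blast
  have r: "bl_ratio x * q \<noteq> 0" "bl_ratio y * q \<noteq> 0"
    using x y q by (auto simp: bl_ratio_def nonzero_quad_def split: prod.splits)
  note cx = module_invariants_closed_forms[OF qK x] and cy = module_invariants_closed_forms[OF qK y]
  show ?thesis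
  proof
    assume "module_invariants q x = module_invariants q y"
    then have inv: "muC q x = muC q y" "kappaC q x = kappaC q y" "gammaM q x = gammaM q y"
      "betaM q x = betaM q y" by (simp_all add: module_invariants_def)
    have "bl_ratio x * q = bl_ratio y * q" using inv(1) cx(1) cy(1) by simp
    then have bl: "bl_ratio x = bl_ratio y" using q by simp
    let ?c = "\<lambda>z k. coeff (orbit_poly q z) k"
    have c0: "?c x 0 = ?c y 0" and c1: "?c x 1 = ?c y 1" and c2: "?c x 2 = ?c y 2"
      using cx(2,4,5) cy(2,4,5) inv(2,4) bl by simp_all
    moreover have "?c x 3 = ?c y 3" using cx(3) cy(3) inv(3) bl c1 r by simp
    ultimately have "orbit_poly q x = orbit_poly q y"
      by (intro trans[OF orbit_poly_eq_pCons trans[OF _ orbit_poly_eq_pCons[symmetric]]]) simp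
    with bl show "orbit_invariant q x = orbit_invariant q y" by (simp add: orbit_invariant_def)
  next
    assume "orbit_invariant q x = orbit_invariant q y"
    then have bl: "bl_ratio x = bl_ratio y" and p: "orbit_poly q x = orbit_poly q y"
      by (simp_all add: orbit_invariant_def)
    have "kappaC q x * (bl_ratio x * q)^2 = kappaC q y * (bl_ratio x * q)^2"
      using cx(2) cy(2) bl p by simp
    then have "kappaC q x = kappaC q y" using r by simp
    moreover have "gammaM q x * q * (bl_ratio x * q)^2 = gammaM q y * q * (bl_ratio x * q)^2"
      using cx(3) cy(3) bl p by simp
    then have "gammaM q x = gammaM q y" using r q by simp
    moreover have "betaM q x * (bl_ratio x * q) = betaM q y * (bl_ratio x * q)"
      using cx(4) cy(4) bl p by simp
    then have "betaM q x = betaM q y" using r by simp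
    ultimately show "module_invariants q x = module_invariants q y"
      using cx(1) cy(1) bl by (simp add: module_invariants_def)
  qed
qed

section \<open>Homomorphisms fixing $m_0$\<close>

lemma intertwines_actB_actC_actA:
  fixes q :: "'a::field"
  assumes qK: "q^2 - inverse q^2 \<noteq> 0" and x: "nonzero_quad x" and y: "nonzero_quad y"
    and gamma: "gammaM q x = gammaM q y" and beta: "betaM q x = betaM q y"
    and f: "fin_linear f" and fA: "\<And>v. v \<in> fin_vec \<Longrightarrow> f (actA q x v) = actA q y (f v)"
    and w: "w \<in> fin_vec"
    and fB: "f (actB q x w) = actB q y (f w)" and fC: "f (actC q x w) = actC q y (f w)"
  shows "f (actB q x (actA q x w)) = actB q y (f (actA q x w))"
    and "f (actC q x (actA q x w)) = actC q y (f (actA q x w))"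
  by (simp_all only: actB_actA[OF qK] actC_actA[OF qK x] actC_actA[OF qK y] gamma beta
      fin_linear_lincomb3[OF f] fin_vec_actA fin_vec_actB fin_vec_actC w fA fB fC)

lemma canon_map_is_hom:
  fixes q :: "'a::field"
  assumes qK: "q^2 - inverse q^2 \<noteq> 0" and x: "nonzero_quad x" and y: "nonzero_quad y"
    and inv: "module_invariants q x = module_invariants q y"
  shows "is_hom q x y (canon_map q x y)"
proof -
  let ?F = "canon_map q x y"
  have mu: "muC q x = muC q y" and kappa: "kappaC q x = kappaC q y"
    and gamma: "gammaM q x = gammaM q y" and beta: "betaM q x = betaM q y"
    using inv by (simp_all add: module_invariants_def)
  have "bl_ratio x = bl_ratio y"
    using mu module_invariants_closed_forms(1)[OF qK x] module_invariants_closed_forms(1)[OF qK y]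
      q2_minus_inverse_nonzeroD(1)[OF qK] by simp
  then have thetas_0: "thetas q x 0 = thetas q y 0" by (simp add: thetas_0_eq)
  have F_e0: "?F (basis_vec 0) = basis_vec 0" by (simp add: canon_map_basis)
  have "?F (actB q x v) = actB q y (?F v) \<and> ?F (actC q x v) = actC q y (?F v)"
    if "v \<in> fin_vec" for v
  proof (rule actA_cyclic_induct[where q = q and x = x, OF _ _ _ that])
    fix u v :: "nat \<Rightarrow> 'a" and s t
    assume "u \<in> fin_vec" "v \<in> fin_vec"
      "?F (actB q x u) = actB q y (?F u) \<and> ?F (actC q x u) = actC q y (?F u)"
      "?F (actB q x v) = actB q y (?F v) \<and> ?F (actC q x v) = actC q y (?F v)"
    then show "?F (actB q x (\<lambda>j. s * u j + t * v j)) = actB q y (?F (\<lambda>j. s * u j + t * v j))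
        \<and> ?F (actC q x (\<lambda>j. s * u j + t * v j)) = actC q y (?F (\<lambda>j. s * u j + t * v j))"
      by (simp add: actB_lincomb actC_lincomb fin_linear_lincomb[OF fin_linear_canon_map]
          fin_vec_actB fin_vec_actC)
  next
    show "?F (actB q x (basis_vec 0)) = actB q y (?F (basis_vec 0))
        \<and> ?F (actC q x (basis_vec 0)) = actC q y (?F (basis_vec 0))"
      unfolding F_e0 actB_basis_0 actC_basis_0
      by (simp add: fin_linear_scale[OF fin_linear_canon_map] fin_vec_basis thetas_0
          fin_linear_lincomb[OF fin_linear_canon_map] fin_vec_actA canon_map_actA F_e0 mu kappa)
  next
    fix w :: "nat \<Rightarrow> 'a"
    assume w: "w \<in> fin_vec"
      and IH: "?F (actB q x w) = actB q y (?F w) \<and> ?F (actC q x w) = actC q y (?F w)"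
    show "?F (actB q x (actA q x w)) = actB q y (?F (actA q x w))
        \<and> ?F (actC q x (actA q x w)) = actC q y (?F (actA q x w))"
      using intertwines_actB_actC_actA[OF qK x y gamma beta fin_linear_canon_map canon_map_actA w
          IH[THEN conjunct1] IH[THEN conjunct2]] ..
  qed
  then show ?thesis
    unfolding is_hom_iff using fin_linear_canon_map canon_map_actA by blast
qed

lemma lincomb_basis_0_cancel:
  fixes s t :: "'a::field"
  shows "(\<lambda>j. a * u j + s * basis_vec 0 j + b * v j) = (\<lambda>j. a * u j + t * basis_vec 0 j + b * v j)
    \<Longrightarrow> s = t"
  by (drule fun_cong[of _ _ 0]) (simp add: basis_vec_def)

lemma is_hom_actC_basis_0_coeffs:
  assumes f: "is_hom q x y f" and f0: "f (basis_vec 0) = basis_vec 0"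
  shows "muC q x = muC q y \<and> kappaC q x = kappaC q y"
proof -
  let ?e0 = "basis_vec 0"
  have "(\<lambda>j. kappaC q x * ?e0 j + muC q x * actA q y ?e0 j) = f (actC q x ?e0)"
    unfolding actC_basis_0
    by (simp add: fin_linear_lincomb[OF is_homD(1)[OF f]] fin_vec_basis fin_vec_actA
        is_homD(2)[OF f] f0)
  also have "\<dots> = actC q y ?e0" by (simp add: fin_vec_basis is_homD(4)[OF f] f0)
  also have "\<dots> = (\<lambda>j. kappaC q y * ?e0 j + muC q y * actA q y ?e0 j)"
    by (rule actC_basis_0)
  finally have C: "(\<lambda>j. kappaC q x * ?e0 j + muC q x * actA q y ?e0 j)
      = (\<lambda>j. kappaC q y * ?e0 j + muC q y * actA q y ?e0 j)" .
  from fun_cong[OF C, of 1] have "muC q x = muC q y"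
    by (simp add: actA_def basis_vec_def)
  moreover from fun_cong[OF C, of 0] this have "kappaC q x = kappaC q y"
    by (simp add: actA_def basis_vec_def)
  ultimately show ?thesis ..
qed

lemma is_hom_gammaM:
  fixes q :: "'a::field"
  assumes qK: "q^2 - inverse q^2 \<noteq> 0"
    and f: "is_hom q x y f" and f0: "f (basis_vec 0) = basis_vec 0"
  shows "gammaM q x = gammaM q y"
proof -
  let ?e0 = "basis_vec 0 :: nat \<Rightarrow> 'a" and ?K = "q^2 - inverse q^2"
  note fin = fin_vec_basis fin_vec_actA fin_vec_actB fin_vec_actC
  note hom = is_homD(2-4)[OF f]
  have "(\<lambda>j. q^2 * actA q y (actB q y ?e0) j + (- q * ?K * (gammaM q x / (q + inverse q))) * ?e0 j
      + (q * ?K) * actC q y ?e0 j) = f (actB q x (actA q x ?e0))"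
    unfolding actB_actA[OF qK] by (simp only: fin_linear_lincomb3[OF is_homD(1)[OF f]] fin hom f0)
  also have "\<dots> = actB q y (actA q y ?e0)" by (simp only: fin hom f0)
  also have "\<dots> = (\<lambda>j. q^2 * actA q y (actB q y ?e0) j
      + (- q * ?K * (gammaM q y / (q + inverse q))) * ?e0 j + (q * ?K) * actC q y ?e0 j)"
    by (rule actB_actA[OF qK])
  finally have "- q * ?K * (gammaM q x / (q + inverse q))
      = - q * ?K * (gammaM q y / (q + inverse q))"
    by (rule lincomb_basis_0_cancel)
  then show ?thesis
    using qK q2_minus_inverse_nonzeroD[OF qK] by simp
qed

lemma is_hom_betaM:
  fixes q :: "'a::field"
  assumes qK: "q^2 - inverse q^2 \<noteq> 0" and x: "nonzero_quad x" and y: "nonzero_quad y"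
    and f: "is_hom q x y f" and f0: "f (basis_vec 0) = basis_vec 0"
  shows "betaM q x = betaM q y"
proof -
  let ?e0 = "basis_vec 0 :: nat \<Rightarrow> 'a" and ?K = "q^2 - inverse q^2"
  note fin = fin_vec_basis fin_vec_actA fin_vec_actB fin_vec_actC
  note hom = is_homD(2-4)[OF f]
  have "(\<lambda>j. inverse q^2 * actA q y (actC q y ?e0) j
      + (?K * inverse q * (betaM q x / (q + inverse q))) * ?e0 j
      + (- ?K * inverse q) * actB q y ?e0 j) = f (actC q x (actA q x ?e0))"
    unfolding actC_actA[OF qK x] by (simp only: fin_linear_lincomb3[OF is_homD(1)[OF f]] fin hom f0)
  also have "\<dots> = actC q y (actA q y ?e0)" by (simp only: fin hom f0)
  also have "\<dots> = (\<lambda>j. inverse q^2 * actA q y (actC q y ?e0) j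
      + (?K * inverse q * (betaM q y / (q + inverse q))) * ?e0 j
      + (- ?K * inverse q) * actB q y ?e0 j)"
    by (rule actC_actA[OF qK y])
  finally have "?K * inverse q * (betaM q x / (q + inverse q))
      = ?K * inverse q * (betaM q y / (q + inverse q))"
    by (rule lincomb_basis_0_cancel)
  then show ?thesis
    using qK q2_minus_inverse_nonzeroD[OF qK] by simp
qed

lemma is_hom_module_invariants:
  fixes q :: "'a::field"
  assumes qK: "q^2 - inverse q^2 \<noteq> 0" and x: "nonzero_quad x" and y: "nonzero_quad y"
    and f: "is_hom q x y f" and f0: "f (basis_vec 0) = basis_vec 0"
  shows "module_invariants q x = module_invariants q y"
  using is_hom_actC_basis_0_coeffs[OF f f0] is_hom_gammaM[OF qK f f0] is_hom_betaM[OF qK x y f f0]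
  by (simp add: module_invariants_def)

lemma hom_comp_eq_id:
  assumes f: "is_hom q x y f" and g: "is_hom q y x g"
    and f0: "f (basis_vec 0) = basis_vec 0" and g0: "g (basis_vec 0) = basis_vec 0"
    and v: "v \<in> fin_vec"
  shows "g (f v) = v"
  using is_homD[OF f] is_homD[OF g] fin_linear_fin_vec[OF is_homD(1)[OF f]]
  by (induction rule: actA_cyclic_induct[where q = q and x = x, OF _ _ _ v])
    (simp_all add: f0 g0 fin_linear_lincomb fin_vec_actA)

lemma homs_is_iso:
  assumes f: "is_hom q x y f" and g: "is_hom q y x g"
    and f0: "f (basis_vec 0) = basis_vec 0" and g0: "g (basis_vec 0) = basis_vec 0"
  shows "is_iso q x y f"
  unfolding is_iso_def
proof (intro conjI f bij_betw_byWitness[where f' = g])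
  show "\<forall>v\<in>fin_vec. g (f v) = v" using hom_comp_eq_id[OF f g f0 g0] by blast
  show "\<forall>v\<in>fin_vec. f (g v) = v" using hom_comp_eq_id[OF g f g0 f0] by blast
  show "f ` fin_vec \<subseteq> fin_vec" using fin_linear_fin_vec[OF is_homD(1)[OF f]] by blast
  show "g ` fin_vec \<subseteq> fin_vec" using fin_linear_fin_vec[OF is_homD(1)[OF g]] by blast
qed

lemma hom_exists_iff:
  fixes q :: "'a::field"
  assumes qK: "q^2 - inverse q^2 \<noteq> 0" and x: "nonzero_quad x" and y: "nonzero_quad y"
  shows "(\<exists>f. is_hom q x y f \<and> f (basis_vec 0) = basis_vec 0)
    \<longleftrightarrow> module_invariants q x = module_invariants q y"
  using is_hom_module_invariants[OF qK x y] canon_map_is_hom[OF qK x y] canon_map_basis[of q x y 0]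
  by auto

lemma iso_exists_iff:
  fixes q :: "'a::field"
  assumes qK: "q^2 - inverse q^2 \<noteq> 0" and x: "nonzero_quad x" and y: "nonzero_quad y"
  shows "(\<exists>f. is_iso q x y f \<and> f (basis_vec 0) = basis_vec 0)
    \<longleftrightarrow> module_invariants q x = module_invariants q y"
proof
  assume "\<exists>f. is_iso q x y f \<and> f (basis_vec 0) = basis_vec 0"
  then show "module_invariants q x = module_invariants q y"
    using hom_exists_iff[OF qK x y] by (auto simp: is_iso_def)
next
  assume inv: "module_invariants q x = module_invariants q y"
  obtain f where f: "is_hom q x y f" "f (basis_vec 0) = basis_vec 0"
    using hom_exists_iff[OF qK x y] inv by blast
  obtain g where g: "is_hom q y x g" "g (basis_vec 0) = basis_vec 0"
    using hom_exists_iff[OF qK y x] inv by metis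
  show "\<exists>f. is_iso q x y f \<and> f (basis_vec 0) = basis_vec 0"
    using homs_is_iso[OF f(1) g(1) f(2) g(2)] f(2) by blast
qed

section \<open>Orbits\<close>

lemma prod_list_map_eq_if_mset_eq:
  fixes f :: "'a \<Rightarrow> 'b::comm_monoid_mult"
  assumes "mset xs = mset ys"
  shows "(\<Prod>x\<leftarrow>xs. f x) = (\<Prod>y\<leftarrow>ys. f y)"
proof -
  have "(\<Prod>x\<leftarrow>zs. f x) = prod_mset (image_mset f (mset zs))" for zs
    by (subst prod_mset_prod_list[symmetric]) simp
  then show ?thesis using assms by simp
qed

lemma swap_closed_move_to_front:
  assumes swap: "\<And>xs a b ys. R (xs @ a # b # ys) \<Longrightarrow> R (xs @ b # a # ys)"
  shows "R (xs @ v # ys) \<Longrightarrow> R (v # xs @ ys)"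
proof (induction xs arbitrary: ys rule: rev_induct)
  case (snoc x xs)
  then have "R (xs @ v # x # ys)" using swap[of xs x v ys] by simp
  then show ?case using snoc.IH[of "x # ys"] by simp
qed simp

lemma swap_closed_if_prod_linear_factors_eq:
  fixes R :: "'a::idom list \<Rightarrow> bool"
  assumes "R us" and "(\<Prod>u\<leftarrow>us. [:-u, 1:]) = (\<Prod>v\<leftarrow>vs. [:-v, 1:])"
    and swap: "\<And>xs a b ys. R (xs @ a # b # ys) \<Longrightarrow> R (xs @ b # a # ys)"
  shows "R vs"
  using assms
proof (induction vs arbitrary: R us)
  case Nil
  have "us = []"
  proof (rule ccontr)
    assume "us \<noteq> []"
    then obtain u us' where "us = u # us'" by (cases us) auto
    then have "poly (\<Prod>u\<leftarrow>us. [:-u, 1:]) u = 0" by simp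
    with Nil.prems(2) show False by simp
  qed
  with Nil.prems(1) show ?case by simp
next
  case (Cons v vs)
  have "poly (\<Prod>u\<leftarrow>us. [:-u, 1:]) v = 0" using Cons.prems(2) by simp
  then have "v \<in> set us" by (induction us) auto
  then obtain xs ys where us: "us = xs @ v # ys" by (meson split_list)
  have R_front: "R (v # xs @ ys)"
    using swap_closed_move_to_front[of R, OF Cons.prems(3)] Cons.prems(1) us by blast
  have prod_split: "(\<Prod>u\<leftarrow>xs @ v # ys. f u) = f v * (\<Prod>u\<leftarrow>xs @ ys. f u)"
    for f :: "'a \<Rightarrow> 'a poly"
    by (simp add: mult.left_commute)
  have "[:-v, 1:] * (\<Prod>u\<leftarrow>xs @ ys. [:-u, 1:]) = [:-v, 1:] * (\<Prod>u\<leftarrow>vs. [:-u, 1:])"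
    using Cons.prems(2) unfolding us prod_split by (simp only: list.map prod_list.Cons)
  then have "(\<Prod>u\<leftarrow>xs @ ys. [:-u, 1:]) = (\<Prod>u\<leftarrow>vs. [:-u, 1:])"
    by (rule mult_left_cancel[THEN iffD1, rotated]) simp
  moreover have "R (v # zs @ a # b # ws) \<Longrightarrow> R (v # zs @ b # a # ws)" for zs a b ws
    using Cons.prems(3)[of "v # zs"] by simp
  ultimately show "R (v # vs)"
    using Cons.IH[of "\<lambda>zs. R (v # zs)" "xs @ ys"] R_front by blast
qed

lemma orbit_coords_generators:
  fixes q a b c l s :: "'a::field"
  assumes q: "q \<noteq> 0" and x: "nonzero_quad (a,b,c,l)"
  shows "orbit_coords q (- a, - b, - c, - l) = orbit_coords q (a,b,c,l)"
    and "orbit_coords q (a, b, inverse c, l) = [inverse (c * l), c / l, a * b * q, b * q / a]"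
    and "orbit_coords q (inverse a, b, c, l) = [c / l, inverse (c * l), b * q / a, a * b * q]"
    and "s^2 = a * b * c * l * q \<Longrightarrow>
      orbit_coords q (a / s, b / s, c / s, l / s) = [c / l, a * b * q, inverse (c * l), b * q / a]"
proof -
  have nz: "a \<noteq> 0" "b \<noteq> 0" "c \<noteq> 0" "l \<noteq> 0" using x by (simp_all add: nonzero_quad_def)
  show "orbit_coords q (- a, - b, - c, - l) = orbit_coords q (a,b,c,l)"
    and "orbit_coords q (a, b, inverse c, l) = [inverse (c * l), c / l, a * b * q, b * q / a]"
    and "orbit_coords q (inverse a, b, c, l) = [c / l, inverse (c * l), b * q / a, a * b * q]"
    by (simp_all add: orbit_coords_def divide_inverse mult.commute)
  assume s2: "s^2 = a * b * c * l * q"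
  then have s: "s \<noteq> 0" using nz q by auto
  have "inverse (c / s * (l / s)) = a * b * q" "a / s * (b / s) * q = inverse (c * l)"
    using s nz q s2 by (simp_all add: field_simps power2_eq_square)
  moreover have "c / s / (l / s) = c / l" "b / s * q / (a / s) = b * q / a" using s by simp_all
  ultimately show "orbit_coords q (a / s, b / s, c / s, l / s)
      = [c / l, a * b * q, inverse (c * l), b * q / a]"
    unfolding orbit_coords_def prod.case by (simp only:)
qed

lemma orbit_step_nonzero_iff:
  fixes q :: "'a::field"
  assumes step: "orbit_step q x y" and q: "q \<noteq> 0"
  shows "nonzero_quad x \<longleftrightarrow> nonzero_quad y"
proof -
  obtain a b c l where xq: "x = (a,b,c,l)" by (cases x)
  from step consider "y = (- a, - b, - c, - l)" | "y = (a, b, inverse c, l)"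
    | "y = (inverse a, b, c, l)"
    | s where "s^2 = a * b * c * l * q" "y = (a / s, b / s, c / s, l / s)"
    unfolding orbit_step_def xq by auto
  then show ?thesis
  proof cases
    case 4
    then show ?thesis using q by (auto simp: xq nonzero_quad_def)
  qed (simp_all add: xq nonzero_quad_def)
qed

lemma orbit_step_invariant:
  fixes q :: "'a::field"
  assumes step: "orbit_step q x y" and q: "q \<noteq> 0" and x: "nonzero_quad x"
  shows "orbit_invariant q x = orbit_invariant q y"
proof -
  obtain a b c l where xq: "x = (a,b,c,l)" by (cases x)
  have nz: "a \<noteq> 0" "b \<noteq> 0" "c \<noteq> 0" "l \<noteq> 0" using x by (simp_all add: xq nonzero_quad_def)
  have coords: "orbit_coords q (a,b,c,l) = [c / l, inverse (c * l), a * b * q, b * q / a]"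
    by (simp add: orbit_coords_def)
  note gen = orbit_coords_generators[OF q x[unfolded xq]]
  have "bl_ratio y = bl_ratio x \<and> mset (orbit_coords q y) = mset (orbit_coords q x)"
  proof -
    from step consider "y = (- a, - b, - c, - l)" | "y = (a, b, inverse c, l)"
      | "y = (inverse a, b, c, l)"
      | s where "s^2 = a * b * c * l * q" "y = (a / s, b / s, c / s, l / s)"
      unfolding orbit_step_def xq by auto
    then show ?thesis
    proof cases
      case 1
      then show ?thesis using gen(1) by (simp add: xq bl_ratio_def)
    next
      case 2
      then have "orbit_coords q y = [inverse (c * l), c / l, a * b * q, b * q / a]"
        using gen(2) by simp
      with 2 show ?thesis by (simp add: xq bl_ratio_def coords add_mset_commute)
    next
      case 3
      then have "orbit_coords q y = [c / l, inverse (c * l), b * q / a, a * b * q]"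
        using gen(3) by simp
      with 3 show ?thesis by (simp add: xq bl_ratio_def coords add_mset_commute)
    next
      case 4
      then have "orbit_coords q y = [c / l, a * b * q, inverse (c * l), b * q / a]"
        using gen(4) by simp
      moreover have "s \<noteq> 0" using 4(1) nz q by auto
      ultimately show ?thesis using 4(2) by (simp add: xq bl_ratio_def coords add_mset_commute)
    qed
  qed
  then show ?thesis
    unfolding orbit_invariant_def orbit_poly_def by (metis prod_list_map_eq_if_mset_eq)
qed

lemma approx_imp_orbit_invariant_eq:
  fixes q :: "'a::field"
  assumes "approx q x y" and q: "q \<noteq> 0" and x: "nonzero_quad x"
  shows "nonzero_quad y \<and> orbit_invariant q x = orbit_invariant q y"
  using assms(1) unfolding approx_def
proof (induction rule: rtranclp_induct)
  case (step y z)
  then show ?case using orbit_step_nonzero_iff[OF _ q] orbit_step_invariant[OF _ q] by metis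
qed (use x in simp)

lemma alg_closed_field_sqrt:
  fixes z :: "'a::field"
  assumes "alg_closed_field TYPE('a)"
  obtains s where "s^2 = z"
proof -
  have "degree [:-z, 0, 1:] \<ge> 1" by simp
  then obtain s where "poly [:-z, 0, 1::'a:] s = 0"
    using assms unfolding alg_closed_field_def by blast
  then have "s^2 = z" by (simp add: power2_eq_square algebra_simps)
  then show thesis by (rule that)
qed

lemma orbit_coords_swap:
  fixes q :: "'a::field"
  assumes ac: "alg_closed_field TYPE('a)" and q: "q \<noteq> 0" and x: "nonzero_quad x"
    and coords: "orbit_coords q x = xs @ u # v # ys"
  shows "\<exists>y. orbit_step q x y \<and> nonzero_quad y \<and> bl_ratio y = bl_ratio x
    \<and> orbit_coords q y = xs @ v # u # ys"
proof -
  obtain a b c l where xq: "x = (a,b,c,l)" by (cases x)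
  have nz: "a \<noteq> 0" "b \<noteq> 0" "c \<noteq> 0" "l \<noteq> 0" using x by (simp_all add: xq nonzero_quad_def)
  have "length xs + length ys = 2"
    using arg_cong[OF coords, of length] by (simp add: xq orbit_coords_def)
  then consider "xs = []" | x1 where "xs = [x1]" | x1 x2 where "xs = [x1, x2]"
    by (cases xs; cases "tl xs") auto
  then show ?thesis
  proof cases
    case 1
    then show ?thesis using coords nz
      by (intro exI[of _ "(a, b, inverse c, l)"])
        (auto simp: xq orbit_step_def nonzero_quad_def bl_ratio_def orbit_coords_def
          orbit_coords_generators[OF q x[unfolded xq]] divide_inverse)
  next
    case 2
    obtain s where s2: "s^2 = a * b * c * l * q" using alg_closed_field_sqrt[OF ac] .
    have "s \<noteq> 0" using s2 nz q by auto
    moreover have "orbit_coords q x = [c / l, inverse (c * l), a * b * q, b * q / a]"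
      by (simp add: xq orbit_coords_def)
    ultimately show ?thesis using coords nz s2 2
      by (intro exI[of _ "(a / s, b / s, c / s, l / s)"])
        (auto simp: xq orbit_step_def nonzero_quad_def bl_ratio_def
          orbit_coords_generators(4)[OF q x[unfolded xq] s2])
  next
    case 3
    then show ?thesis using coords nz
      by (intro exI[of _ "(inverse a, b, c, l)"])
        (auto simp: xq orbit_step_def nonzero_quad_def bl_ratio_def orbit_coords_def
          orbit_coords_generators[OF q x[unfolded xq]] divide_inverse)
  qed
qed

lemma approx_if_orbit_coords_eq:
  fixes q :: "'a::field"
  assumes q: "q \<noteq> 0" and x: "nonzero_quad x" and y: "nonzero_quad y"
    and bl: "bl_ratio x = bl_ratio y" and coords: "orbit_coords q x = orbit_coords q y"
  shows "approx q x y"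
proof -
  obtain a b c l where xq: "x = (a,b,c,l)" by (cases x)
  obtain a' b' c' l' where yq: "y = (a',b',c',l')" by (cases y)
  have nzx: "a \<noteq> 0" "b \<noteq> 0" "c \<noteq> 0" "l \<noteq> 0" using x by (simp_all add: xq nonzero_quad_def)
  have nzy: "a' \<noteq> 0" "b' \<noteq> 0" "c' \<noteq> 0" "l' \<noteq> 0" using y by (simp_all add: yq nonzero_quad_def)
  have e: "c / l = c' / l'" "inverse (c * l) = inverse (c' * l')" "a * b * q = a' * b' * q"
    "b / l = b' / l'"
    using coords bl by (simp_all add: xq yq orbit_coords_def bl_ratio_def)
  have c': "c' = c * l' / l" and b': "b' = b * l' / l"
    using e(1,4) nzx nzy by (simp_all add: field_simps)
  have "c * l = c' * l'" using e(2) by (metis inverse_inverse_eq)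
  then have "l'^2 = l^2" using nzx by (simp add: c' field_simps power2_eq_square)
  then consider "l' = l" | "l' = - l" by (auto simp: power2_eq_iff)
  then show ?thesis
  proof cases
    case 1
    then have "c' = c" "b' = b" using c' b' nzx by simp_all
    moreover from this have "a' = a" using e(3) nzx q by simp
    ultimately show ?thesis using 1 by (simp add: xq yq approx_def)
  next
    case 2
    then have "c' = - c" "b' = - b" using c' b' nzx by simp_all
    moreover have "a' = - a"
    proof -
      have "(a + a') * (b * q) = 0" using e(3) \<open>b' = - b\<close> by (simp add: algebra_simps)
      then show ?thesis using nzx q by (simp add: add_eq_0_iff)
    qed
    ultimately have "orbit_step q x y" using 2 by (simp add: xq yq orbit_step_def)
    then show ?thesis by (simp add: approx_def r_into_rtranclp)
  qed
qed

lemma approx_if_orbit_invariant_eq: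
  fixes q :: "'a::field"
  assumes ac: "alg_closed_field TYPE('a)" and q: "q \<noteq> 0"
    and x: "nonzero_quad x" and y: "nonzero_quad y"
    and inv: "orbit_invariant q x = orbit_invariant q y"
  shows "approx q x y"
proof -
  define R where "R zs \<longleftrightarrow> (\<exists>z. approx q x z \<and> nonzero_quad z \<and> bl_ratio z = bl_ratio x
    \<and> orbit_coords q z = zs)" for zs
  have "R (orbit_coords q y)"
  proof (rule swap_closed_if_prod_linear_factors_eq)
    show "R (orbit_coords q x)"
      unfolding R_def using x by (intro exI[of _ x]) (simp add: approx_def)
    show "(\<Prod>u\<leftarrow>orbit_coords q x. [:-u, 1:]) = (\<Prod>v\<leftarrow>orbit_coords q y. [:-v, 1:])"
      using inv by (simp add: orbit_invariant_def orbit_poly_def)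
  next
    fix xs a b ys
    assume "R (xs @ a # b # ys)"
    then obtain z where z: "approx q x z" "nonzero_quad z" "bl_ratio z = bl_ratio x"
      "orbit_coords q z = xs @ a # b # ys" by (auto simp: R_def)
    obtain z' where "orbit_step q z z'" "nonzero_quad z'" "bl_ratio z' = bl_ratio z"
      "orbit_coords q z' = xs @ b # a # ys"
      using orbit_coords_swap[OF ac q z(2,4)] by blast
    moreover have "approx q x z'"
      using z(1) \<open>orbit_step q z z'\<close> by (simp add: approx_def rtranclp.rtrancl_into_rtrancl)
    ultimately have "approx q x z' \<and> nonzero_quad z' \<and> bl_ratio z' = bl_ratio x
        \<and> orbit_coords q z' = xs @ b # a # ys" using z(3) by simp
    then show "R (xs @ b # a # ys)" unfolding R_def by blast
  qed
  then obtain z where z: "approx q x z" "nonzero_quad z" "bl_ratio z = bl_ratio x"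
    "orbit_coords q z = orbit_coords q y" by (auto simp: R_def)
  have "bl_ratio x = bl_ratio y" using inv by (simp add: orbit_invariant_def)
  then have "approx q z y" using approx_if_orbit_coords_eq[OF q z(2) y] z(3,4) by simp
  with z(1) show ?thesis unfolding approx_def by (rule rtranclp_trans)
qed

lemma approx_iff_orbit_invariant_eq:
  fixes q :: "'a::field"
  assumes ac: "alg_closed_field TYPE('a)" and q: "q \<noteq> 0"
    and x: "nonzero_quad x" and y: "nonzero_quad y"
  shows "approx q x y \<longleftrightarrow> orbit_invariant q x = orbit_invariant q y"
  using approx_imp_orbit_invariant_eq[OF _ q x] approx_if_orbit_invariant_eq[OF ac q x y] by blast

theorem theorem7p1:
  fixes q a b c l a' b' c' l' :: "'a::field"
  assumes "alg_closed_field TYPE('a)"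
    and "\<exists>d::nat. d > 0 \<and> q ^ d = 1"
    and "q ^ 4 \<noteq> 1"
    and "a \<noteq> 0" "b \<noteq> 0" "c \<noteq> 0" "l \<noteq> 0"
    and "a' \<noteq> 0" "b' \<noteq> 0" "c' \<noteq> 0" "l' \<noteq> 0"
  shows "(approx q (a,b,c,l) (a',b',c',l')
            \<longleftrightarrow> (\<exists>f. is_hom q (a,b,c,l) (a',b',c',l') f \<and> f (basis_vec 0) = basis_vec 0))
       \<and> (approx q (a,b,c,l) (a',b',c',l')
            \<longleftrightarrow> (\<exists>f. is_hom q (a',b',c',l') (a,b,c,l) f \<and> f (basis_vec 0) = basis_vec 0))
       \<and> (approx q (a,b,c,l) (a',b',c',l')
            \<longleftrightarrow> (\<exists>f. is_iso q (a,b,c,l) (a',b',c',l') f \<and> f (basis_vec 0) = basis_vec 0))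
       \<and> (approx q (a,b,c,l) (a',b',c',l')
            \<longleftrightarrow> (\<exists>f. is_iso q (a',b',c',l') (a,b,c,l) f \<and> f (basis_vec 0) = basis_vec 0))"
proof -
  \<comment> \<open>The root-of-unity hypothesis is only needed to exclude \<open>q = 0\<close>.\<close>
  have q: "q \<noteq> 0" using assms(2) by (auto simp: power_0_left)
  have qK: "q^2 - inverse q^2 \<noteq> 0" using q2_minus_inverse_nonzero_if_q4[OF q assms(3)] .
  let ?x = "(a,b,c,l)" and ?y = "(a',b',c',l')"
  have x: "nonzero_quad ?x" and y: "nonzero_quad ?y"
    using assms(4-11) by (simp_all add: nonzero_quad_def)
  have "approx q ?x ?y \<longleftrightarrow> module_invariants q ?x = module_invariants q ?y"
    using approx_iff_orbit_invariant_eq[OF assms(1) q x y] module_invariants_eq_iff[OF qK x y]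
    by simp
  then show ?thesis
    using hom_exists_iff[OF qK x y] hom_exists_iff[OF qK y x]
      iso_exists_iff[OF qK x y] iso_exists_iff[OF qK y x] by auto
qed

end
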